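(* Let $G=(V,E,\mu,\omega)$ be a weighted graph with a fixed reference vertex $p\in V$, and suppose there exist constants $D>0$ and $0\le\alpha\le 2$ such that $\mathrm{Deg}(x)\le D\,d(x,p)^{\alpha}$ for all $x\in V$, $x\neq p$. Let $T\in(0,\infty]$. Suppose $u,v\in\mathcal{M}_T$ are both solutions of the wave equation on $(-T,T)\times V$ with the same data $f,g,h$, i.e. $u,v\in C^2_t((-T,T)\times V)$ and for $w\in\{u,v\}$: $$\partial_t^2 w(t,x)-\Delta w(t,x)=f(t,x)\ \ ((t,x)\in(-T,T)\times V),\qquad w(0,x)=g(x),\ \ \partial_t w(0,x)=h(x)\ \ (x\in V),$$ where $f\in C^0_t((-T,T)\times V)$ and $g,h:V\to\mathbb{R}$. Then $u\equiv v$.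
   Context: A weighted graph $G=(V,E,\mu,\omega)$ consists of a locally finite, connected, simple, undirected graph $(V,E)$, a symmetric edge weight $\omega:E\to(0,\infty)$, $\{x,y\}\mapsto\omega_{xy}=\omega_{yx}$, and a vertex weight $\mu:V\to(0,\infty)$. Write $x\sim y$ if $\{x,y\}\in E$; $d(x,y)$ is the combinatorial graph distance. The Laplacian is $\Delta f(x)=\sum_{y\sim x}\frac{\omega_{xy}}{\mu_x}(f(y)-f(x))$ for $f:V\to\mathbb{R}$, and the weighted degree is $\mathrm{Deg}(x)=\sum_{y\sim x}\frac{\omega_{xy}}{\mu_x}$. For an interval $I$ and $k\in\mathbb{N}_0\cup\{\infty\}$, $u\in C^k_t(I\times V)$ means $u:I\times V\to\mathbb{R}$ and $u(\cdot,x)\in C^k(I)$ for every $x\in V$; $\Delta$ acts in the space variable. For $T\in(0,\infty]$, $\mathcal{M}_T$ is the class of functions $u:(-T,T)\times V\to\mathbb{R}$ for which there is a constant $C$ with $|u(t,x)|\le C\,d(x,p)^{(2-\alpha)d(x,p)}$ for all $(t,x)\in(-T,T)\times V$, $x\neq p$ (with $\alpha$ the exponent in the degree growth condition). *)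

theory Defs
  imports "HOL-Analysis.Analysis"
begin

text \<open>A weighted graph on the vertex type 'a (vertex set = UNIV):
  adjacency relation adj, symmetric edge weight w, vertex weight mu.\<close>
definition weighted_graph :: "('a \<Rightarrow> 'a \<Rightarrow> bool) \<Rightarrow> ('a \<Rightarrow> 'a \<Rightarrow> real) \<Rightarrow> ('a \<Rightarrow> real) \<Rightarrow> bool" where
  "weighted_graph adj w mu \<longleftrightarrow>
     (\<forall>x y. adj x y \<longrightarrow> adj y x) \<and>
     (\<forall>x. \<not> adj x x) \<and>
     (\<forall>x. finite {y. adj x y}) \<and>
     (\<forall>x y. adj\<^sup>*\<^sup>* x y) \<and>
     (\<forall>x y. adj x y \<longrightarrow> w x y = w y x \<and> w x y > 0) \<and>
     (\<forall>x. mu x > 0)"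

definition gdist :: "('a \<Rightarrow> 'a \<Rightarrow> bool) \<Rightarrow> 'a \<Rightarrow> 'a \<Rightarrow> nat" where
  "gdist adj x y = (LEAST n. (adj ^^ n) x y)"

definition graph_laplacian :: "('a \<Rightarrow> 'a \<Rightarrow> bool) \<Rightarrow> ('a \<Rightarrow> 'a \<Rightarrow> real) \<Rightarrow> ('a \<Rightarrow> real) \<Rightarrow> ('a \<Rightarrow> real) \<Rightarrow> 'a \<Rightarrow> real" where
  "graph_laplacian adj w mu f x = (\<Sum>y\<in>{y. adj x y}. w x y / mu x * (f y - f x))"

definition wdeg :: "('a \<Rightarrow> 'a \<Rightarrow> bool) \<Rightarrow> ('a \<Rightarrow> 'a \<Rightarrow> real) \<Rightarrow> ('a \<Rightarrow> real) \<Rightarrow> 'a \<Rightarrow> real" where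
  "wdeg adj w mu x = (\<Sum>y\<in>{y. adj x y}. w x y / mu x)"

definition time_int :: "ereal \<Rightarrow> real set" where
  "time_int T = {t. - T < ereal t \<and> ereal t < T}"

definition growth_class :: "('a \<Rightarrow> 'a \<Rightarrow> bool) \<Rightarrow> 'a \<Rightarrow> real \<Rightarrow> ereal \<Rightarrow> (real \<Rightarrow> 'a \<Rightarrow> real) set" where
  "growth_class adj p \<alpha> T = {u. \<exists>C. \<forall>t\<in>time_int T. \<forall>x. x \<noteq> p \<longrightarrow>
      \<bar>u t x\<bar> \<le> C * real (gdist adj x p) powr ((2 - \<alpha>) * real (gdist adj x p))}"

definition wave_solution :: "('a \<Rightarrow> 'a \<Rightarrow> bool) \<Rightarrow> ('a \<Rightarrow> 'a \<Rightarrow> real) \<Rightarrow> ('a \<Rightarrow> real) \<Rightarrow> ereal \<Rightarrow>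
    (real \<Rightarrow> 'a \<Rightarrow> real) \<Rightarrow> ('a \<Rightarrow> real) \<Rightarrow> ('a \<Rightarrow> real) \<Rightarrow> (real \<Rightarrow> 'a \<Rightarrow> real) \<Rightarrow> bool" where
  "wave_solution adj w mu T f g h u \<longleftrightarrow>
     (\<exists>u1 u2. \<forall>x.
        (\<forall>t\<in>time_int T. ((\<lambda>s. u s x) has_real_derivative u1 t x) (at t) \<and>
                          ((\<lambda>s. u1 s x) has_real_derivative u2 t x) (at t)) \<and>
        continuous_on (time_int T) (\<lambda>t. u2 t x) \<and>
        (\<forall>t\<in>time_int T. u2 t x - graph_laplacian adj w mu (u t) x = f t x) \<and>
        u 0 x = g x \<and> u1 0 x = h x)"

end

theory Submission
  imports Defs "HOL-Real_Asymp.Real_Asymp"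
begin

text \<open>The difference W = u - v solves the homogeneous wave equation with zero data at t = 0.
  If W and its time derivative vanish at t0, integrating the equation twice and bounding the
  Laplacian by the weighted degree, k times over, gives
  |W(s,x)| \<le> (2 K(d + k))^k G(d + k) |s - t0|^(2k) / (2k)!, where d = d(x,p), K(r) bounds the degree
  and G(r) bounds |W| at distance r from p. Under Deg \<le> D d^\<alpha> and |W| \<le> C d^((2-\<alpha>)d) this is at
  most (c e^2 |s - t0|^2)^k times a polynomial in k, which tends to 0 once |s - t0| is below a step
  length depending only on Deg(p) and D. So the set of times at which W and its derivative vanish
  identically is open; it is closed by continuity, hence all of (-T,T) by connectedness.\<close>

lemma abs_le_of_abs_deriv_le:
  fixes \<psi> \<phi> :: "real \<Rightarrow> real"
  assumes "t0 \<le> s"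
    and "\<And>r. t0 \<le> r \<Longrightarrow> r \<le> s \<Longrightarrow> (\<psi> has_real_derivative \<psi>' r) (at r)"
    and "\<And>r. t0 \<le> r \<Longrightarrow> r \<le> s \<Longrightarrow> (\<phi> has_real_derivative \<phi>' r) (at r)"
    and "\<And>r. t0 \<le> r \<Longrightarrow> r \<le> s \<Longrightarrow> \<bar>\<psi>' r\<bar> \<le> \<phi>' r"
    and "\<psi> t0 = 0" "\<phi> t0 = 0"
  shows "\<bar>\<psi> s\<bar> \<le> \<phi> s"
proof -
  have "\<phi> t0 - \<psi> t0 \<le> \<phi> s - \<psi> s"
  proof (rule DERIV_nonneg_imp_nondecreasing[OF \<open>t0 \<le> s\<close>])
    fix r assume "t0 \<le> r" "r \<le> s"
    with assms show "\<exists>y. ((\<lambda>r. \<phi> r - \<psi> r) has_real_derivative y) (at r) \<and> 0 \<le> y"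
      by (intro exI[of _ "\<phi>' r - \<psi>' r"]) (force intro: DERIV_diff simp: abs_le_iff)
  qed
  moreover have "\<phi> t0 + \<psi> t0 \<le> \<phi> s + \<psi> s"
  proof (rule DERIV_nonneg_imp_nondecreasing[OF \<open>t0 \<le> s\<close>])
    fix r assume "t0 \<le> r" "r \<le> s"
    with assms show "\<exists>y. ((\<lambda>r. \<phi> r + \<psi> r) has_real_derivative y) (at r) \<and> 0 \<le> y"
      by (intro exI[of _ "\<phi>' r + \<psi>' r"]) (force intro: DERIV_add simp: abs_le_iff)
  qed
  ultimately show ?thesis using assms(5,6) by linarith
qed

lemma has_real_derivative_shifted_power:
  "((\<lambda>r. M * (r - c) ^ Suc m / Suc m) has_real_derivative M * (r - c) ^ m) (at r)"
proof -
  have "((\<lambda>r. (r - c) ^ Suc m) has_real_derivative (1 + of_nat m) * (1 * (r - c) ^ m)) (at r)"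
    by (intro DERIV_power_Suc) (auto intro!: derivative_eq_intros)
  from DERIV_cdivide[OF DERIV_cmult[OF this, of M], of "Suc m"] show ?thesis
    by (rule DERIV_cong) (simp add: field_simps)
qed

lemma abs_le_of_deriv_power_bound:
  fixes \<psi> :: "real \<Rightarrow> real"
  assumes "a \<le> t0" "t0 \<le> b" "a \<le> s" "s \<le> b"
    and der: "\<And>r. a \<le> r \<Longrightarrow> r \<le> b \<Longrightarrow> (\<psi> has_real_derivative \<psi>' r) (at r)"
    and bound: "\<And>r. a \<le> r \<Longrightarrow> r \<le> b \<Longrightarrow> \<bar>\<psi>' r\<bar> \<le> M * \<bar>r - t0\<bar> ^ m"
    and "\<psi> t0 = 0"
  shows "\<bar>\<psi> s\<bar> \<le> M * \<bar>s - t0\<bar> ^ Suc m / Suc m"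
proof (cases "t0 \<le> s")
  case True
  have "\<bar>\<psi> s\<bar> \<le> M * (s - t0) ^ Suc m / Suc m"
  proof (rule abs_le_of_abs_deriv_le[OF True,
        where \<phi> = "\<lambda>r. M * (r - t0) ^ Suc m / Suc m" and \<phi>' = "\<lambda>r. M * (r - t0) ^ m"])
    fix r assume "t0 \<le> r" "r \<le> s"
    show "((\<lambda>r. M * (r - t0) ^ Suc m / Suc m) has_real_derivative M * (r - t0) ^ m) (at r)"
      by (rule has_real_derivative_shifted_power)
    show "(\<psi> has_real_derivative \<psi>' r) (at r)" "\<bar>\<psi>' r\<bar> \<le> M * (r - t0) ^ m"
      using assms \<open>t0 \<le> r\<close> \<open>r \<le> s\<close> der[of r] bound[of r] by auto
  qed (use assms in auto)
  then show ?thesis using True by simp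
next
  case False
  have "\<bar>\<psi> (- (- s))\<bar> \<le> M * (- s - - t0) ^ Suc m / Suc m"
  proof (rule abs_le_of_abs_deriv_le[of "- t0" "- s" "\<lambda>r. \<psi> (- r)" "\<lambda>r. - \<psi>' (- r)"
        "\<lambda>r. M * (r - - t0) ^ Suc m / Suc m" "\<lambda>r. M * (r - - t0) ^ m"])
    fix r assume "- t0 \<le> r" "r \<le> - s"
    show "((\<lambda>r. M * (r - - t0) ^ Suc m / Suc m) has_real_derivative M * (r - - t0) ^ m) (at r)"
      by (rule has_real_derivative_shifted_power)
    show "((\<lambda>r. \<psi> (- r)) has_real_derivative - \<psi>' (- r)) (at r)"
      using assms \<open>- t0 \<le> r\<close> \<open>r \<le> - s\<close> der[of "- r"] by (simp flip: DERIV_mirror)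
    show "\<bar>- \<psi>' (- r)\<bar> \<le> M * (r - - t0) ^ m"
      using assms \<open>- t0 \<le> r\<close> \<open>r \<le> - s\<close> bound[of "- r"] by (simp add: add.commute)
  qed (use assms False in auto)
  then show ?thesis using False by simp
qed

lemma abs_le_of_second_deriv_power_bound:
  fixes \<phi> :: "real \<Rightarrow> real"
  assumes "a \<le> t0" "t0 \<le> b" "a \<le> s" "s \<le> b"
    and "\<And>r. a \<le> r \<Longrightarrow> r \<le> b \<Longrightarrow> (\<phi> has_real_derivative \<phi>' r) (at r)"
    and "\<And>r. a \<le> r \<Longrightarrow> r \<le> b \<Longrightarrow> (\<phi>' has_real_derivative \<phi>'' r) (at r)"
    and "\<And>r. a \<le> r \<Longrightarrow> r \<le> b \<Longrightarrow> \<bar>\<phi>'' r\<bar> \<le> M * \<bar>r - t0\<bar> ^ m"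
    and "\<phi> t0 = 0" "\<phi>' t0 = 0"
  shows "\<bar>\<phi> s\<bar> \<le> M * \<bar>s - t0\<bar> ^ Suc (Suc m) / (real (Suc m) * real (Suc (Suc m)))"
proof -
  have "\<bar>\<phi>' r\<bar> \<le> M / Suc m * \<bar>r - t0\<bar> ^ Suc m" if "a \<le> r" "r \<le> b" for r
    using abs_le_of_deriv_power_bound[of a t0 b r \<phi>'] assms that by auto
  then have "\<bar>\<phi> s\<bar> \<le> M / Suc m * \<bar>s - t0\<bar> ^ Suc (Suc m) / Suc (Suc m)"
    using abs_le_of_deriv_power_bound[of a t0 b s \<phi>] assms by blast
  then show ?thesis by simp
qed

lemma power_div_fact_le_exp:
  fixes x :: real
  assumes "0 \<le> x"
  shows "x ^ n / fact n \<le> exp x"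
proof -
  have exp_sums: "(\<lambda>n. x ^ n / fact n) sums exp x"
    using exp_converges[of x] by (simp add: divide_inverse mult.commute scaleR_conv_of_real)
  have "(\<Sum>i\<in>{n}. x ^ i / fact i) \<le> exp x"
    using sum_le_suminf[OF sums_summable[OF exp_sums], of "{n}"] assms sums_unique[OF exp_sums] by auto
  then show ?thesis by simp
qed

lemma powr_self_mono:
  fixes \<beta> r r' :: real
  assumes "0 \<le> \<beta>" "0 \<le> r" "r \<le> r'" "1 \<le> r'"
  shows "r powr (\<beta> * r) \<le> r' powr (\<beta> * r')"
proof -
  have "r powr (\<beta> * r) \<le> r' powr (\<beta> * r)"
    using assms by (intro powr_mono2) auto
  also have "\<dots> \<le> r' powr (\<beta> * r')"
    using assms by (intro powr_mono mult_left_mono) auto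
  finally show ?thesis .
qed

lemma growth_weight_le:
  fixes n k :: nat and \<alpha> :: real
  assumes "0 \<le> \<alpha>" "\<alpha> \<le> 2" "n + 1 \<le> k"
  defines "X \<equiv> real n + real k + 1"
  shows "X powr (k * \<alpha>) * X powr ((2 - \<alpha>) * X) \<le> exp (2 * real k) * fact (2 * k) * (2 * real k) ^ (2 * n + 2)"
proof -
  have X: "1 \<le> X" "X \<le> 2 * real k" using assms by auto
  have "k * \<alpha> + (2 - \<alpha>) * X = real (2 * k) + (2 - \<alpha>) * (n + 1)"
    unfolding X_def by (simp add: algebra_simps)
  then have "X powr (k * \<alpha>) * X powr ((2 - \<alpha>) * X) = X powr real (2 * k) * X powr ((2 - \<alpha>) * (n + 1))"
    by (simp only: powr_add[symmetric])
  also have "\<dots> = X ^ (2 * k) * X powr ((2 - \<alpha>) * (n + 1))"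
    using X by (simp only: powr_realpow)
  also have "\<dots> \<le> (exp (2 * real k) * fact (2 * k)) * (2 * real k) ^ (2 * n + 2)"
  proof (rule mult_mono)
    have "X ^ (2 * k) \<le> real (2 * k) ^ (2 * k)" using X by (intro power_mono) auto
    also have "\<dots> \<le> exp (2 * real k) * fact (2 * k)"
      using power_div_fact_le_exp[of "real (2 * k)" "2 * k"] by (simp add: divide_le_eq)
    finally show "X ^ (2 * k) \<le> exp (2 * real k) * fact (2 * k)" .
    have "X powr ((2 - \<alpha>) * (n + 1)) \<le> (2 * real k) powr ((2 - \<alpha>) * (n + 1))"
      using X assms by (intro powr_mono2) auto
    also have "\<dots> \<le> (2 * real k) powr real (2 * n + 2)"
      using X assms by (intro powr_mono) (auto simp: algebra_simps)
    also have "\<dots> = (2 * real k) ^ (2 * n + 2)" using X by (intro powr_realpow) auto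
    finally show "X powr ((2 - \<alpha>) * (n + 1)) \<le> (2 * real k) ^ (2 * n + 2)" .
  qed auto
  finally show ?thesis by simp
qed

lemma degree_profile_power_le:
  fixes K0 D \<alpha> r X :: real
  assumes "0 \<le> K0" "0 \<le> D" "0 \<le> \<alpha>" "0 \<le> r" "r \<le> X" "1 \<le> X"
  shows "(2 * (K0 + D * r powr \<alpha>)) ^ k \<le> (2 * (K0 + D)) ^ k * X powr (k * \<alpha>)"
proof -
  have "D * r powr \<alpha> \<le> D * X powr \<alpha>"
    using assms by (intro mult_left_mono powr_mono2) auto
  moreover have "K0 \<le> K0 * X powr \<alpha>"
    using mult_left_mono[OF ge_one_powr_ge_zero[OF \<open>1 \<le> X\<close> \<open>0 \<le> \<alpha>\<close>] \<open>0 \<le> K0\<close>] by simp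
  ultimately have "2 * (K0 + D * r powr \<alpha>) \<le> 2 * (K0 + D) * X powr \<alpha>"
    by (simp add: algebra_simps)
  then have "(2 * (K0 + D * r powr \<alpha>)) ^ k \<le> (2 * (K0 + D) * X powr \<alpha>) ^ k"
    using assms by (intro power_mono) auto
  also have "\<dots> = (2 * (K0 + D)) ^ k * X powr (k * \<alpha>)"
    using assms by (simp add: power_mult_distrib powr_power)
  finally show ?thesis .
qed

lemma geometric_factor_le_quarter_power:
  fixes c \<sigma> :: real
  assumes "0 \<le> c" "0 \<le> \<sigma>" "\<sigma> \<le> 1 / (2 * exp 1 * (c + 1))"
  shows "c ^ k * exp (2 * real k) * \<sigma> ^ (2 * k) \<le> (1/4) ^ k"
proof -
  have "c * exp 2 * \<sigma>\<^sup>2 \<le> c * exp 2 * (1 / (2 * exp 1 * (c + 1)))\<^sup>2"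
    using assms by (intro mult_left_mono power_mono) auto
  also have "\<dots> = c / (4 * (c + 1)\<^sup>2)"
    by (simp add: power_divide power_mult_distrib exp_of_nat_mult[of 2 1, simplified, symmetric])
  also have "\<dots> \<le> 1/4"
  proof -
    have "c \<le> (c + 1)\<^sup>2" using assms by (simp add: power2_eq_square algebra_simps)
    then show ?thesis using assms by (simp add: field_simps)
  qed
  finally have small: "c * exp 2 * \<sigma>\<^sup>2 \<le> 1/4" .
  have "exp (2 * real k) = exp 2 ^ k" using exp_of_nat_mult[of k 2] by (simp add: mult.commute)
  moreover have "\<sigma> ^ (2 * k) = (\<sigma>\<^sup>2) ^ k" by (simp add: power_mult)
  ultimately have "c ^ k * exp (2 * real k) * \<sigma> ^ (2 * k) = (c * exp 2 * \<sigma>\<^sup>2) ^ k"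
    by (simp add: power_mult_distrib)
  also have "\<dots> \<le> (1/4) ^ k" using small assms by (intro power_mono) auto
  finally show ?thesis .
qed

lemma iterate_bound_le_quarter_power:
  fixes K0 A B D \<alpha> \<sigma> :: real and n k :: nat
  assumes "0 \<le> K0" "0 \<le> A" "0 \<le> B" "0 < D" "0 \<le> \<alpha>" "\<alpha> \<le> 2"
    and "0 \<le> \<sigma>" "\<sigma> \<le> 1 / (2 * exp 1 * (2 * (K0 + D) + 1))" and "n + 1 \<le> k"
  shows "(2 * (K0 + D * (real n + real k) powr \<alpha>)) ^ k
      * (A + B * (real n + real k + 1) powr ((2 - \<alpha>) * (real n + real k + 1)))
      * \<sigma> ^ (2 * k) / fact (2 * k) \<le> (A + B) * (1/4) ^ k * (2 * real k) ^ (2 * n + 2)"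
proof -
  define X where "X = real n + real k + 1"
  define c where "c = 2 * (K0 + D)"
  have X: "1 \<le> X" unfolding X_def by simp
  have c: "0 \<le> c" unfolding c_def using assms by simp
  have degree_part: "(2 * (K0 + D * (real n + real k) powr \<alpha>)) ^ k \<le> c ^ k * X powr (k * \<alpha>)"
    unfolding c_def X_def using assms by (intro degree_profile_power_le) auto
  have "1 \<le> X powr ((2 - \<alpha>) * X)" using X assms by (intro ge_one_powr_ge_zero) auto
  then have growth_part: "A + B * X powr ((2 - \<alpha>) * X) \<le> (A + B) * X powr ((2 - \<alpha>) * X)"
    using mult_left_mono[of 1 "X powr ((2 - \<alpha>) * X)" A] assms by (simp add: algebra_simps)
  have "(2 * (K0 + D * (real n + real k) powr \<alpha>)) ^ k * (A + B * X powr ((2 - \<alpha>) * X)) * \<sigma> ^ (2 * k) / fact (2 * k)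
      \<le> c ^ k * X powr (k * \<alpha>) * ((A + B) * X powr ((2 - \<alpha>) * X)) * \<sigma> ^ (2 * k) / fact (2 * k)"
    using degree_part growth_part assms c by (intro divide_right_mono mult_right_mono mult_mono) auto
  also have "\<dots> = (A + B) * (c ^ k * \<sigma> ^ (2 * k)) * (X powr (k * \<alpha>) * X powr ((2 - \<alpha>) * X)) / fact (2 * k)"
    by (simp only: mult_ac)
  also have "\<dots> \<le> (A + B) * (c ^ k * \<sigma> ^ (2 * k)) * (exp (2 * real k) * fact (2 * k) * (2 * real k) ^ (2 * n + 2))
      / fact (2 * k)"
    using growth_weight_le[of \<alpha> n k] assms c unfolding X_def
    by (intro divide_right_mono mult_left_mono) auto
  also have "\<dots> = (A + B) * (c ^ k * exp (2 * real k) * \<sigma> ^ (2 * k)) * (2 * real k) ^ (2 * n + 2)"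
    by simp
  also have "\<dots> \<le> (A + B) * (1/4) ^ k * (2 * real k) ^ (2 * n + 2)"
    using geometric_factor_le_quarter_power[of c \<sigma> k] assms c unfolding c_def
    by (intro mult_right_mono mult_left_mono) auto
  finally show ?thesis unfolding X_def c_def .
qed

lemma eq_0_of_abs_le_quarter_power:
  fixes z C :: real
  assumes "\<And>k. N \<le> k \<Longrightarrow> \<bar>z\<bar> \<le> C * (1/4) ^ k * (2 * real k) ^ j"
  shows "z = 0"
proof -
  have "(\<lambda>k. (1/4::real) ^ k * (2 * real k) ^ j) \<longlonglongrightarrow> 0" by real_asymp
  then have "(\<lambda>k. C * ((1/4) ^ k * (2 * real k) ^ j)) \<longlonglongrightarrow> 0" by (rule tendsto_mult_right_zero)
  then have "\<bar>z\<bar> \<le> 0" by (rule LIMSEQ_le_const) (use assms in \<open>auto simp: mult.assoc\<close>)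
  then show ?thesis by simp
qed

lemma has_real_derivative_zero_of_vanishing:
  fixes f :: "real \<Rightarrow> real"
  assumes "(f has_real_derivative f') (at t)" "open S" "t \<in> S" "\<And>r. r \<in> S \<Longrightarrow> f r = 0"
  shows "f' = 0"
proof -
  have "((\<lambda>r. 0) has_real_derivative f') (at t)"
    by (rule has_field_derivative_transform_within_open[OF assms(1-3)]) (use assms(4) in auto)
  then show ?thesis using DERIV_const DERIV_unique by blast
qed

lemma weighted_graph_weight_pos:
  assumes "weighted_graph adj w mu" "adj x y"
  shows "0 < w x y / mu x"
  using assms unfolding weighted_graph_def by auto

lemma wdeg_nonneg:
  assumes "weighted_graph adj w mu"
  shows "0 \<le> wdeg adj w mu x"
  unfolding wdeg_def using weighted_graph_weight_pos[OF assms] by (intro sum_nonneg) (simp add: less_imp_le)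

lemma gdist_le_adj:
  assumes "weighted_graph adj w mu" "adj x y"
  shows "gdist adj y p \<le> gdist adj x p + 1"
proof -
  have "\<exists>n. (adj ^^ n) x p"
    using assms unfolding weighted_graph_def by (blast intro: rtranclp_imp_relpowp)
  then have "(adj ^^ gdist adj x p) x p" unfolding gdist_def by (rule LeastI_ex)
  moreover have "adj y x" using assms unfolding weighted_graph_def by blast
  ultimately have "(adj ^^ Suc (gdist adj x p)) y p" by (rule relpowp_Suc_I2[rotated])
  then show ?thesis unfolding gdist_def[of adj y p] by (metis Least_le Suc_eq_plus1)
qed

lemma abs_graph_laplacian_le:
  assumes "weighted_graph adj w mu"
    and "\<And>y. adj x y \<Longrightarrow> \<bar>F y\<bar> \<le> Q" and "\<bar>F x\<bar> \<le> Q"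
  shows "\<bar>graph_laplacian adj w mu F x\<bar> \<le> wdeg adj w mu x * (2 * Q)"
proof -
  have "\<bar>graph_laplacian adj w mu F x\<bar> \<le> (\<Sum>y\<in>{y. adj x y}. \<bar>w x y / mu x * (F y - F x)\<bar>)"
    unfolding graph_laplacian_def by (rule sum_abs)
  also have "\<dots> \<le> (\<Sum>y\<in>{y. adj x y}. w x y / mu x * (2 * Q))"
  proof (rule sum_mono)
    fix y assume "y \<in> {y. adj x y}"
    then have "0 < w x y / mu x" "\<bar>F y - F x\<bar> \<le> 2 * Q"
      using assms weighted_graph_weight_pos[OF assms(1)] by fastforce+
    then show "\<bar>w x y / mu x * (F y - F x)\<bar> \<le> w x y / mu x * (2 * Q)"
      by (metis abs_mult abs_of_pos less_imp_le mult_left_mono)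
  qed
  also have "\<dots> = wdeg adj w mu x * (2 * Q)" unfolding wdeg_def by (simp add: sum_distrib_right)
  finally show ?thesis .
qed

lemma abs_graph_laplacian_le_radial:
  fixes F :: "'a \<Rightarrow> real" and E :: "real \<Rightarrow> real"
  assumes wg: "weighted_graph adj w mu" and E: "mono_on {0..} E"
    and F: "\<And>y. \<bar>F y\<bar> \<le> E (gdist adj y p)"
  shows "\<bar>graph_laplacian adj w mu F x\<bar> \<le> wdeg adj w mu x * (2 * E (real (gdist adj x p) + 1))"
proof (rule abs_graph_laplacian_le[OF wg])
  fix y assume "adj x y"
  then have "real (gdist adj y p) \<le> real (gdist adj x p + 1)"
    using gdist_le_adj[OF wg] by (intro of_nat_mono) blast
  then have "E (gdist adj y p) \<le> E (real (gdist adj x p) + 1)" by (intro mono_onD[OF E]) auto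
  then show "\<bar>F y\<bar> \<le> E (real (gdist adj x p) + 1)" using F[of y] by linarith
next
  have "E (gdist adj x p) \<le> E (real (gdist adj x p) + 1)" by (intro mono_onD[OF E]) auto
  then show "\<bar>F x\<bar> \<le> E (real (gdist adj x p) + 1)" using F[of x] by linarith
qed

lemma graph_laplacian_diff:
  "graph_laplacian adj w mu (\<lambda>y. F y - G y) x = graph_laplacian adj w mu F x - graph_laplacian adj w mu G x"
  unfolding graph_laplacian_def sum_subtractf[symmetric] by (rule sum.cong) (simp_all add: right_diff_distrib)

definition homogeneous_wave_solution :: "('a \<Rightarrow> 'a \<Rightarrow> bool) \<Rightarrow> ('a \<Rightarrow> 'a \<Rightarrow> real) \<Rightarrow> ('a \<Rightarrow> real) \<Rightarrow> real set \<Rightarrow>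
    (real \<Rightarrow> 'a \<Rightarrow> real) \<Rightarrow> (real \<Rightarrow> 'a \<Rightarrow> real) \<Rightarrow> bool" where
  "homogeneous_wave_solution adj w mu S W W' \<longleftrightarrow>
     (\<forall>x. \<forall>s\<in>S. ((\<lambda>s. W s x) has_real_derivative W' s x) (at s) \<and>
                ((\<lambda>s. W' s x) has_real_derivative graph_laplacian adj w mu (W s) x) (at s))"

lemma homogeneous_wave_power_bound:
  fixes W W' :: "real \<Rightarrow> 'a \<Rightarrow> real" and K G :: "real \<Rightarrow> real"
  assumes wg: "weighted_graph adj w mu"
    and sol: "homogeneous_wave_solution adj w mu {a..b} W W'"
    and t0: "a \<le> t0" "t0 \<le> b" and init: "\<And>x. W t0 x = 0" "\<And>x. W' t0 x = 0"
    and K: "mono_on {0..} K" "\<And>r. 0 \<le> r \<Longrightarrow> 0 \<le> K r"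
    and G: "mono_on {0..} G" "\<And>r. 0 \<le> r \<Longrightarrow> 0 \<le> G r"
    and deg: "\<And>x. wdeg adj w mu x \<le> K (gdist adj x p)"
    and base: "\<And>x s. a \<le> s \<Longrightarrow> s \<le> b \<Longrightarrow> \<bar>W s x\<bar> \<le> G (gdist adj x p)"
  shows "a \<le> s \<Longrightarrow> s \<le> b \<Longrightarrow>
    \<bar>W s x\<bar> \<le> (2 * K (real (gdist adj x p) + real k)) ^ k * G (real (gdist adj x p) + real k)
      * \<bar>s - t0\<bar> ^ (2 * k) / fact (2 * k)"
proof (induction k arbitrary: x s)
  case 0
  then show ?case using base by simp
next
  case (Suc k)
  define n where "n = real (gdist adj x p)"
  define E where "E r m = (2 * K (m + k)) ^ k * G (m + k) * \<bar>r - t0\<bar> ^ (2 * k) / fact (2 * k)" for r m :: real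
  define C where "C = (2 * K (n + Suc k)) ^ k * G (n + Suc k)"
  have C: "0 \<le> C" unfolding C_def n_def using K G by simp
  have lap_bound: "\<bar>graph_laplacian adj w mu (W r) x\<bar> \<le> 2 * K n * C / fact (2 * k) * \<bar>r - t0\<bar> ^ (2 * k)"
    if r: "a \<le> r" "r \<le> b" for r
  proof -
    have "mono_on {0..} (E r)" unfolding E_def using K G
      by (intro mono_onI divide_right_mono mult_right_mono mult_mono power_mono) (auto intro: mono_onD)
    then have "\<bar>graph_laplacian adj w mu (W r) x\<bar> \<le> wdeg adj w mu x * (2 * E r (n + 1))"
      unfolding n_def by (rule abs_graph_laplacian_le_radial[OF wg]) (use Suc.IH[OF r] in \<open>simp add: E_def\<close>)
    also have "\<dots> \<le> K n * (2 * E r (n + 1))"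
      using deg[of x] K G unfolding n_def E_def by (intro mult_right_mono) auto
    also have "\<dots> = 2 * K n * C / fact (2 * k) * \<bar>r - t0\<bar> ^ (2 * k)"
      unfolding E_def C_def by (simp add: add_ac)
    finally show ?thesis .
  qed
  have "\<bar>W s x\<bar> \<le> 2 * K n * C / fact (2 * k) * \<bar>s - t0\<bar> ^ Suc (Suc (2 * k))
      / (real (Suc (2 * k)) * real (Suc (Suc (2 * k))))"
    by (rule abs_le_of_second_deriv_power_bound[OF t0 Suc.prems, where \<phi> = "\<lambda>s. W s x"
          and \<phi>' = "\<lambda>s. W' s x" and \<phi>'' = "\<lambda>s. graph_laplacian adj w mu (W s) x"])
      (use sol lap_bound init in \<open>auto simp: homogeneous_wave_solution_def\<close>)
  also have "\<dots> = 2 * K n * C * \<bar>s - t0\<bar> ^ (2 * Suc k) / fact (2 * Suc k)"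
    by (simp add: algebra_simps)
  also have "\<dots> \<le> 2 * K (n + Suc k) * C * \<bar>s - t0\<bar> ^ (2 * Suc k) / fact (2 * Suc k)"
    using K C unfolding n_def by (intro divide_right_mono mult_right_mono) (auto intro: mono_onD)
  finally show ?case unfolding C_def n_def by (simp add: mult_ac)
qed

lemma homogeneous_wave_growth_power_bound:
  fixes W W' :: "real \<Rightarrow> 'a \<Rightarrow> real"
  assumes wg: "weighted_graph adj w mu"
    and D: "0 < D" and \<alpha>: "0 \<le> \<alpha>" "\<alpha> \<le> 2"
    and deg: "\<forall>x. x \<noteq> p \<longrightarrow> wdeg adj w mu x \<le> D * real (gdist adj x p) powr \<alpha>"
    and sol: "homogeneous_wave_solution adj w mu {a..b} W W'"
    and t0: "a \<le> t0" "t0 \<le> b" and init: "\<And>x. W t0 x = 0" "\<And>x. W' t0 x = 0"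
    and bound_p: "\<And>s. a \<le> s \<Longrightarrow> s \<le> b \<Longrightarrow> \<bar>W s p\<bar> \<le> A"
    and growth: "\<And>s x. a \<le> s \<Longrightarrow> s \<le> b \<Longrightarrow> x \<noteq> p \<Longrightarrow>
      \<bar>W s x\<bar> \<le> B * real (gdist adj x p) powr ((2 - \<alpha>) * real (gdist adj x p))"
    and s: "a \<le> s" "s \<le> b"
  shows "\<bar>W s x\<bar> \<le> (2 * (wdeg adj w mu p + D * (real (gdist adj x p) + real k) powr \<alpha>)) ^ k
    * (A + \<bar>B\<bar> * (real (gdist adj x p) + real k + 1) powr ((2 - \<alpha>) * (real (gdist adj x p) + real k + 1)))
    * \<bar>s - t0\<bar> ^ (2 * k) / fact (2 * k)"
proof -
  define K0 where "K0 = wdeg adj w mu p"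
  define K where "K r = K0 + D * r powr \<alpha>" for r
  define G where "G r = A + \<bar>B\<bar> * (r + 1) powr ((2 - \<alpha>) * (r + 1))" for r
  have K0: "0 \<le> K0" unfolding K0_def by (rule wdeg_nonneg[OF wg])
  have A: "0 \<le> A" using bound_p[of t0] t0 by linarith
  have G_le: "\<bar>B\<bar> * r powr ((2 - \<alpha>) * r) \<le> G r" if "0 \<le> r" for r
  proof -
    have "r powr ((2 - \<alpha>) * r) \<le> (r + 1) powr ((2 - \<alpha>) * (r + 1))"
      using that \<alpha> by (intro powr_self_mono) auto
    then show ?thesis unfolding G_def using A by (simp add: mult_left_mono add_increasing)
  qed
  have "\<bar>W s x\<bar> \<le> (2 * K (real (gdist adj x p) + real k)) ^ k * G (real (gdist adj x p) + real k)
      * \<bar>s - t0\<bar> ^ (2 * k) / fact (2 * k)"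
  proof (rule homogeneous_wave_power_bound[OF wg sol t0 init _ _ _ _ _ _ s])
    show "mono_on {0..} K" unfolding K_def using \<alpha> D
      by (intro mono_onI) (auto intro!: mult_left_mono powr_mono2)
    show "mono_on {0..} G" unfolding G_def using \<alpha>
      by (intro mono_onI) (auto intro!: mult_left_mono powr_self_mono)
    show "0 \<le> K r" if "0 \<le> r" for r unfolding K_def using K0 D by simp
    show "0 \<le> G r" if "0 \<le> r" for r unfolding G_def using A by simp
    show "wdeg adj w mu y \<le> K (gdist adj y p)" for y
      using deg K0 D unfolding K_def K0_def by (cases "y = p") auto
    show "\<bar>W r y\<bar> \<le> G (gdist adj y p)" if "a \<le> r" "r \<le> b" for r y
    proof (cases "y = p")
      case True
      then show ?thesis using bound_p[OF that] unfolding G_def by (simp add: add_increasing2)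
    next
      case False
      have "\<bar>W r y\<bar> \<le> \<bar>B\<bar> * real (gdist adj y p) powr ((2 - \<alpha>) * real (gdist adj y p))"
        using growth[OF that False] by (rule order_trans) (simp add: mult_right_mono)
      also have "\<dots> \<le> G (gdist adj y p)" by (rule G_le) simp
      finally show ?thesis .
    qed
  qed
  then show ?thesis unfolding K_def G_def K0_def by (simp add: add_ac)
qed

lemma homogeneous_wave_local_zero:
  fixes W W' :: "real \<Rightarrow> 'a \<Rightarrow> real"
  assumes wg: "weighted_graph adj w mu"
    and D: "0 < D" and \<alpha>: "0 \<le> \<alpha>" "\<alpha> \<le> 2"
    and "\<forall>x. x \<noteq> p \<longrightarrow> wdeg adj w mu x \<le> D * real (gdist adj x p) powr \<alpha>"
    and "homogeneous_wave_solution adj w mu {a..b} W W'"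
    and t0: "a \<le> t0" "t0 \<le> b" and "\<And>x. W t0 x = 0" "\<And>x. W' t0 x = 0"
    and bound_p: "\<And>s. a \<le> s \<Longrightarrow> s \<le> b \<Longrightarrow> \<bar>W s p\<bar> \<le> A"
    and "\<And>s x. a \<le> s \<Longrightarrow> s \<le> b \<Longrightarrow> x \<noteq> p \<Longrightarrow>
      \<bar>W s x\<bar> \<le> B * real (gdist adj x p) powr ((2 - \<alpha>) * real (gdist adj x p))"
  obtains \<tau> where "0 < \<tau>" "\<And>s x. a \<le> s \<Longrightarrow> s \<le> b \<Longrightarrow> \<bar>s - t0\<bar> \<le> \<tau> \<Longrightarrow> W s x = 0"
proof
  define c where "c = 2 * (wdeg adj w mu p + D)"
  have c: "0 \<le> c" unfolding c_def using wdeg_nonneg[OF wg] D by (simp add: add_nonneg_nonneg)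
  show "0 < 1 / (2 * exp 1 * (c + 1))" using c by simp
  fix s x assume s: "a \<le> s" "s \<le> b" and near: "\<bar>s - t0\<bar> \<le> 1 / (2 * exp 1 * (c + 1))"
  define n where "n = gdist adj x p"
  have A: "0 \<le> A" using bound_p[of t0] t0 by linarith
  have "\<bar>W s x\<bar> \<le> (A + \<bar>B\<bar>) * (1/4) ^ k * (2 * real k) ^ (2 * n + 2)" if "n + 1 \<le> k" for k
    using homogeneous_wave_growth_power_bound[OF assms s, of x k]
      iterate_bound_le_quarter_power[of "wdeg adj w mu p" A "\<bar>B\<bar>" D \<alpha> "\<bar>s - t0\<bar>" n k]
      near wdeg_nonneg[OF wg] A D \<alpha> that
    unfolding n_def c_def by fastforce
  then show "W s x = 0" by (rule eq_0_of_abs_le_quarter_power)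
qed

lemma homogeneous_wave_vanishes_near:
  fixes W W' :: "real \<Rightarrow> 'a \<Rightarrow> real"
  assumes wg: "weighted_graph adj w mu"
    and D: "0 < D" and \<alpha>: "0 \<le> \<alpha>" "\<alpha> \<le> 2"
    and deg: "\<forall>x. x \<noteq> p \<longrightarrow> wdeg adj w mu x \<le> D * real (gdist adj x p) powr \<alpha>"
    and I: "open I" and sol: "homogeneous_wave_solution adj w mu I W W'"
    and growth: "\<And>s x. s \<in> I \<Longrightarrow> x \<noteq> p \<Longrightarrow>
      \<bar>W s x\<bar> \<le> B * real (gdist adj x p) powr ((2 - \<alpha>) * real (gdist adj x p))"
    and t0: "t0 \<in> I" and init: "\<And>x. W t0 x = 0" "\<And>x. W' t0 x = 0"
  obtains r where "0 < r" "ball t0 r \<subseteq> I" "\<And>s x. s \<in> ball t0 r \<Longrightarrow> W s x = 0 \<and> W' s x = 0"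
proof -
  obtain e where e: "0 < e" "cball t0 e \<subseteq> I" using I t0 open_contains_cball by blast
  define J where "J = {t0 - e..t0 + e}"
  have J: "J \<subseteq> I" using e unfolding J_def by (simp add: cball_eq_atLeastAtMost)
  have sol_J: "homogeneous_wave_solution adj w mu J W W'"
    using sol J unfolding homogeneous_wave_solution_def by blast
  have "continuous_on J (\<lambda>s. W s p)"
    using sol_J unfolding homogeneous_wave_solution_def
    by (intro continuous_at_imp_continuous_on) (blast intro: DERIV_isCont)
  then obtain A where A: "\<And>s. s \<in> J \<Longrightarrow> \<bar>W s p\<bar> \<le> A"
    using continuous_on_compact_bound[of J] unfolding J_def by (metis compact_Icc real_norm_def)
  obtain \<tau> where \<tau>: "0 < \<tau>" and zero: "\<And>s x. s \<in> J \<Longrightarrow> \<bar>s - t0\<bar> \<le> \<tau> \<Longrightarrow> W s x = 0"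
    by (rule homogeneous_wave_local_zero[OF wg D \<alpha> deg sol_J[unfolded J_def] _ _ init, of A B])
      (use e A J growth in \<open>auto simp: J_def\<close>)
  define r where "r = min e \<tau>"
  have ball: "ball t0 r \<subseteq> J" unfolding J_def r_def by (auto simp: dist_real_def)
  have W_zero: "W s x = 0" if "s \<in> ball t0 r" for s x
    using zero[of s x] ball that unfolding r_def by (auto simp: dist_real_def)
  show ?thesis
  proof
    show "0 < r" unfolding r_def using e \<tau> by simp
    show "ball t0 r \<subseteq> I" using ball J by blast
    fix s x assume "s \<in> ball t0 r"
    moreover from this have "((\<lambda>s. W s x) has_real_derivative W' s x) (at s)"
      using sol ball J unfolding homogeneous_wave_solution_def by blast
    ultimately show "W s x = 0 \<and> W' s x = 0"
      using W_zero by (auto intro: has_real_derivative_zero_of_vanishing[of _ _ _ "ball t0 r"])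
  qed
qed

lemma homogeneous_wave_eq_0:
  fixes W W' :: "real \<Rightarrow> 'a \<Rightarrow> real"
  assumes wg: "weighted_graph adj w mu"
    and D: "0 < D" and \<alpha>: "0 \<le> \<alpha>" "\<alpha> \<le> 2"
    and deg: "\<forall>x. x \<noteq> p \<longrightarrow> wdeg adj w mu x \<le> D * real (gdist adj x p) powr \<alpha>"
    and I: "open I" "is_interval I" and sol: "homogeneous_wave_solution adj w mu I W W'"
    and growth: "\<And>s x. s \<in> I \<Longrightarrow> x \<noteq> p \<Longrightarrow>
      \<bar>W s x\<bar> \<le> B * real (gdist adj x p) powr ((2 - \<alpha>) * real (gdist adj x p))"
    and t0: "t0 \<in> I" and init: "\<And>x. W t0 x = 0" "\<And>x. W' t0 x = 0"
    and t: "t \<in> I"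
  shows "W t x = 0"
proof -
  define Z where "Z = {s \<in> I. \<forall>y. W s y = 0 \<and> W' s y = 0}"
  have cont: "continuous_on I (\<lambda>s. W s y)" "continuous_on I (\<lambda>s. W' s y)" for y
    using sol unfolding homogeneous_wave_solution_def
    by (auto intro!: continuous_at_imp_continuous_on DERIV_isCont)
  have "Z = (\<Inter>y. {s \<in> I. W s y = 0} \<inter> {s \<in> I. W' s y = 0})" unfolding Z_def by auto
  then have "closedin (top_of_set I) Z"
    using cont by (auto intro!: closedin_Int continuous_closedin_preimage_constant)
  moreover have "openin (top_of_set I) Z"
  proof (rule open_subset)
    show "open Z" unfolding open_contains_ball
    proof
      fix s assume "s \<in> Z"
      then obtain r where "0 < r" "ball s r \<subseteq> I" "\<And>s' y. s' \<in> ball s r \<Longrightarrow> W s' y = 0 \<and> W' s' y = 0"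
        using homogeneous_wave_vanishes_near[OF wg D \<alpha> deg I(1) sol growth] unfolding Z_def by blast
      then show "\<exists>r>0. ball s r \<subseteq> Z" unfolding Z_def by blast
    qed
  qed (auto simp: Z_def)
  moreover have "t0 \<in> Z" using t0 init unfolding Z_def by simp
  ultimately have "Z = I" using is_interval_connected[OF I(2)] unfolding connected_clopen by blast
  then show ?thesis using t unfolding Z_def by blast
qed

lemma open_time_int: "open (time_int T)"
proof -
  have "time_int T = ereal -` {- T<..<T}" unfolding time_int_def by auto
  then show ?thesis by (simp add: open_ereal_vimage)
qed

lemma is_interval_time_int: "is_interval (time_int T)"
proof (unfold is_interval_1, intro ballI allI impI)
  fix a b x assume "a \<in> time_int T" "b \<in> time_int T" "a \<le> x \<and> x \<le> b"
  then show "x \<in> time_int T" unfolding time_int_def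
    by (auto intro: less_le_trans[of "- T" "ereal a"] le_less_trans[of "ereal x" "ereal b"])
qed

lemma zero_in_time_int: "0 < T \<Longrightarrow> 0 \<in> time_int T"
  unfolding time_int_def by (simp add: zero_ereal_def[symmetric] ereal_uminus_less_reorder)

lemma wave_solution_diff:
  assumes "wave_solution adj w mu T f g h u" "wave_solution adj w mu T f g h v"
  obtains W' where "homogeneous_wave_solution adj w mu (time_int T) (\<lambda>t x. u t x - v t x) W'"
    and "\<And>x. u 0 x - v 0 x = 0" and "\<And>x. W' 0 x = 0"
proof -
  obtain u1 u2 where u: "\<forall>x.
      (\<forall>t\<in>time_int T. ((\<lambda>s. u s x) has_real_derivative u1 t x) (at t) \<and>
                       ((\<lambda>s. u1 s x) has_real_derivative u2 t x) (at t)) \<and>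
      (\<forall>t\<in>time_int T. u2 t x - graph_laplacian adj w mu (u t) x = f t x) \<and> u 0 x = g x \<and> u1 0 x = h x"
    using assms(1) unfolding wave_solution_def by blast
  obtain v1 v2 where v: "\<forall>x.
      (\<forall>t\<in>time_int T. ((\<lambda>s. v s x) has_real_derivative v1 t x) (at t) \<and>
                       ((\<lambda>s. v1 s x) has_real_derivative v2 t x) (at t)) \<and>
      (\<forall>t\<in>time_int T. v2 t x - graph_laplacian adj w mu (v t) x = f t x) \<and> v 0 x = g x \<and> v1 0 x = h x"
    using assms(2) unfolding wave_solution_def by blast
  have lap: "u2 t x - v2 t x = graph_laplacian adj w mu (\<lambda>y. u t y - v t y) x" if "t \<in> time_int T" for t x
  proof -
    have "u2 t x - graph_laplacian adj w mu (u t) x = f t x" "v2 t x - graph_laplacian adj w mu (v t) x = f t x"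
      using u v that by blast+
    then show ?thesis by (simp add: graph_laplacian_diff)
  qed
  have "homogeneous_wave_solution adj w mu (time_int T) (\<lambda>t x. u t x - v t x) (\<lambda>t x. u1 t x - v1 t x)"
    unfolding homogeneous_wave_solution_def
  proof (intro allI ballI conjI)
    fix x t assume t: "t \<in> time_int T"
    show "((\<lambda>s. u s x - v s x) has_real_derivative u1 t x - v1 t x) (at t)"
      using u v t by (intro DERIV_diff) auto
    have "((\<lambda>s. u1 s x - v1 s x) has_real_derivative u2 t x - v2 t x) (at t)"
      using u v t by (intro DERIV_diff) auto
    then show "((\<lambda>s. u1 s x - v1 s x) has_real_derivative graph_laplacian adj w mu (\<lambda>y. u t y - v t y) x) (at t)"
      using lap[OF t] by simp
  qed
  then show ?thesis by (rule that) (use u v in auto)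
qed

lemma growth_class_diff:
  assumes "u \<in> growth_class adj p \<alpha> T" "v \<in> growth_class adj p \<alpha> T"
  shows "(\<lambda>t x. u t x - v t x) \<in> growth_class adj p \<alpha> T"
proof -
  obtain Cu Cv where
    "\<forall>t\<in>time_int T. \<forall>x. x \<noteq> p \<longrightarrow> \<bar>u t x\<bar> \<le> Cu * real (gdist adj x p) powr ((2 - \<alpha>) * real (gdist adj x p))"
    "\<forall>t\<in>time_int T. \<forall>x. x \<noteq> p \<longrightarrow> \<bar>v t x\<bar> \<le> Cv * real (gdist adj x p) powr ((2 - \<alpha>) * real (gdist adj x p))"
    using assms unfolding growth_class_def by blast
  then have "\<forall>t\<in>time_int T. \<forall>x. x \<noteq> p \<longrightarrow>
      \<bar>u t x - v t x\<bar> \<le> (Cu + Cv) * real (gdist adj x p) powr ((2 - \<alpha>) * real (gdist adj x p))"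
    by (smt (verit, best) distrib_right)
  then show ?thesis unfolding growth_class_def by blast
qed

theorem theorem1p2:
  fixes adj :: "'a \<Rightarrow> 'a \<Rightarrow> bool" and w :: "'a \<Rightarrow> 'a \<Rightarrow> real" and mu :: "'a \<Rightarrow> real"
    and p :: 'a and D \<alpha> :: real and T :: ereal
    and f u v :: "real \<Rightarrow> 'a \<Rightarrow> real" and g h :: "'a \<Rightarrow> real"
  assumes "weighted_graph adj w mu"
    and "D > 0" and "0 \<le> \<alpha>" and "\<alpha> \<le> 2"
    and "\<forall>x. x \<noteq> p \<longrightarrow> wdeg adj w mu x \<le> D * real (gdist adj x p) powr \<alpha>"
    and "T > 0"
    and "\<forall>x. continuous_on (time_int T) (\<lambda>t. f t x)"
    and "u \<in> growth_class adj p \<alpha> T" and "v \<in> growth_class adj p \<alpha> T"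
    and "wave_solution adj w mu T f g h u" and "wave_solution adj w mu T f g h v"
  shows "\<forall>t\<in>time_int T. \<forall>x. u t x = v t x"
proof (intro ballI allI)
  fix t x assume t: "t \<in> time_int T"
  obtain W' where sol: "homogeneous_wave_solution adj w mu (time_int T) (\<lambda>t x. u t x - v t x) W'"
    and init: "\<And>x. u 0 x - v 0 x = 0" "\<And>x. W' 0 x = 0"
    using wave_solution_diff[OF assms(10,11)] by blast
  obtain C where growth: "\<And>s y. s \<in> time_int T \<Longrightarrow> y \<noteq> p \<Longrightarrow>
      \<bar>u s y - v s y\<bar> \<le> C * real (gdist adj y p) powr ((2 - \<alpha>) * real (gdist adj y p))"
    using growth_class_diff[OF assms(8,9)] unfolding growth_class_def by blast
  have "u t x - v t x = 0"
    using homogeneous_wave_eq_0[OF assms(1-5) open_time_int is_interval_time_int sol growth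
        zero_in_time_int[OF assms(6)] init t] .
  then show "u t x = v t x" by simp
qed

end
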